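(* For all integers $d\ge 2$ and $n\ge 1$, every Latin hypercuboid in $\mathrm{LHC}(d,n,1)$ is completable. Consequently $\mathrm{NC}_d(n)\ge 2$ whenever it is defined.
   Context: $[n]=\{1,\dots,n\}$. For integers $d\ge2$ and $1\le k\le n$, $\mathrm{LHC}(d,n,k)$ denotes the set of $d$-dimensional arrays of dimensions $n\times\cdots\times n\times k$ (the last coordinate ranging over $[k]$, the others over $[n]$) with entries from $[n]$ such that each symbol occurs at most once in each axis-parallel line (a set of cells obtained by fixing all coordinates but one). A hypercuboid $H\in\mathrm{LHC}(d,n,k)$ is completable if it is contained in (i.e. equals the restriction to the first $k$ values of the last coordinate of) some array in $\mathrm{LHC}(d,n,n)$ (a Latin hypercube). $\mathrm{NC}_d(n)$ denotes the smallest $k$ such that some hypercuboid in $\mathrm{LHC}(d,n,k)$ is not completable. *)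

theory Defs
  imports Main
begin

text \<open>A cell of a d-dimensional n x ... x n x k array is a list of d coordinates;
  coordinates 0..d-2 range over {1..n}, the last coordinate (index d-1) over {1..k}.\<close>
definition cells :: "nat \<Rightarrow> nat \<Rightarrow> nat \<Rightarrow> nat list set" where
  "cells d n k = {c. length c = d \<and> (\<forall>i<d - 1. c ! i \<in> {1..n}) \<and> c ! (d - 1) \<in> {1..k}}"

definition same_line :: "nat list \<Rightarrow> nat list \<Rightarrow> bool" where
  "same_line c c' \<longleftrightarrow> length c = length c' \<and>
     (\<exists>i<length c. \<forall>j<length c. j \<noteq> i \<longrightarrow> c ! j = c' ! j)"

definition LHC :: "nat \<Rightarrow> nat \<Rightarrow> nat \<Rightarrow> (nat list \<Rightarrow> nat) set" where
  "LHC d n k = {H. (\<forall>c \<in> cells d n k. H c \<in> {1..n}) \<and>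
     (\<forall>c \<in> cells d n k. \<forall>c' \<in> cells d n k. c \<noteq> c' \<and> same_line c c' \<longrightarrow> H c \<noteq> H c')}"

definition completable :: "nat \<Rightarrow> nat \<Rightarrow> nat \<Rightarrow> (nat list \<Rightarrow> nat) \<Rightarrow> bool" where
  "completable d n k H \<longleftrightarrow> (\<exists>L \<in> LHC d n n. \<forall>c \<in> cells d n k. L c = H c)"

text \<open>NC_d(n): least k (1 <= k <= n) such that some hypercuboid in LHC(d,n,k) is not completable;
  meaningful only when such k exists.\<close>
definition NC_exists :: "nat \<Rightarrow> nat \<Rightarrow> bool" where
  "NC_exists d n \<longleftrightarrow> (\<exists>k. 1 \<le> k \<and> k \<le> n \<and> (\<exists>H \<in> LHC d n k. \<not> completable d n k H))"

definition NC :: "nat \<Rightarrow> nat \<Rightarrow> nat" where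
  "NC d n = (LEAST k. 1 \<le> k \<and> k \<le> n \<and> (\<exists>H \<in> LHC d n k. \<not> completable d n k H))"

end

theory Submission
  imports Defs
begin

(* A single layer H (last coordinate 1) extends to a Latin hypercube by cyclic shifting:
  the layer with last coordinate t is H with every symbol moved t - 1 steps around the cycle
  1, ..., n. Along a line inside one layer the entries are a shifted line of H, hence distinct;
  along a line in the last direction the same symbol of H is shifted by n distinct amounts. *)

definition cyclic_shift :: "nat \<Rightarrow> nat \<Rightarrow> nat \<Rightarrow> nat" where
  "cyclic_shift n s x = (x - 1 + s) mod n + 1"

lemma cyclic_shift_range: "n \<ge> 1 \<Longrightarrow> cyclic_shift n s x \<in> {1..n}"
  by (simp add: cyclic_shift_def Suc_leI)

lemma cyclic_shift_0:
  assumes "x \<in> {1..n}"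
  shows "cyclic_shift n 0 x = x"
proof -
  have "x - 1 < n" using assms by auto
  then show ?thesis using assms by (simp add: cyclic_shift_def)
qed

lemma cyclic_shift_inj_symbol:
  assumes "x \<in> {1..n}" "y \<in> {1..n}" "cyclic_shift n s x = cyclic_shift n s y"
  shows "x = y"
proof -
  have "(x - 1) mod n = (y - 1) mod n"
    using assms(3) by (simp add: cyclic_shift_def nat_mod_eq_iff)
  moreover have "x - 1 < n" "y - 1 < n" using assms(1,2) by auto
  ultimately have "x - 1 = y - 1" by simp
  then show ?thesis using assms(1,2) by auto
qed

lemma cyclic_shift_inj_amount:
  assumes "s < n" "t < n" "cyclic_shift n s x = cyclic_shift n t x"
  shows "s = t"
proof -
  have "(s + (x - 1)) mod n = (t + (x - 1)) mod n"
    using assms(3) by (simp add: cyclic_shift_def add.commute)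
  then have "s mod n = t mod n" by (simp add: nat_mod_eq_iff)
  then show ?thesis using assms(1,2) by simp
qed

definition base_cell :: "nat \<Rightarrow> nat list \<Rightarrow> nat list" where
  "base_cell d c = c[d - 1 := 1]"

definition cyclic_completion :: "nat \<Rightarrow> nat \<Rightarrow> (nat list \<Rightarrow> nat) \<Rightarrow> nat list \<Rightarrow> nat" where
  "cyclic_completion d n H c = cyclic_shift n (c ! (d - 1) - 1) (H (base_cell d c))"

lemma base_cell_in_cells:
  assumes "d \<ge> 1" "c \<in> cells d n k"
  shows "base_cell d c \<in> cells d n 1"
  using assms by (auto simp: cells_def base_cell_def nth_list_update)

lemma base_cell_id: "c \<in> cells d n 1 \<Longrightarrow> base_cell d c = c"
  by (metis (mono_tags, lifting) atLeastAtMost_singleton base_cell_def cells_def list_update_id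
      mem_Collect_eq singletonD)

lemma base_cell_neq:
  assumes "i < d" "i \<noteq> d - 1" "c ! i \<noteq> c' ! i"
  shows "base_cell d c \<noteq> base_cell d c'"
  using assms by (metis base_cell_def nth_list_update_neq)

lemma same_line_base_cell:
  assumes "length c = d" "length c' = d" "i < d"
    and agree: "\<And>j. j < d \<Longrightarrow> j \<noteq> i \<Longrightarrow> c ! j = c' ! j"
  shows "same_line (base_cell d c) (base_cell d c')"
  unfolding same_line_def using assms
  by (auto simp: base_cell_def nth_list_update intro!: exI[of _ i])

lemma cyclic_completion_restricts:
  assumes "H \<in> LHC d n 1" "c \<in> cells d n 1"
  shows "cyclic_completion d n H c = H c"
proof -
  have "c ! (d - 1) = 1" "H c \<in> {1..n}" using assms by (auto simp: cells_def LHC_def)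
  then show ?thesis
    using base_cell_id[OF assms(2)] by (simp add: cyclic_completion_def cyclic_shift_0)
qed

lemma cyclic_completion_distinct_on_line:
  assumes "d \<ge> 1" and H: "H \<in> LHC d n 1"
    and c: "c \<in> cells d n n" and c': "c' \<in> cells d n n"
    and "c \<noteq> c'" and "same_line c c'"
  shows "cyclic_completion d n H c \<noteq> cyclic_completion d n H c'"
proof
  assume eq: "cyclic_completion d n H c = cyclic_completion d n H c'"
  have len: "length c = d" "length c' = d" using c c' by (auto simp: cells_def)
  obtain i where i: "i < d" and agree: "\<And>j. j < d \<Longrightarrow> j \<noteq> i \<Longrightarrow> c ! j = c' ! j"
    using \<open>same_line c c'\<close> len by (auto simp: same_line_def)
  have differ: "c ! i \<noteq> c' ! i"
    using \<open>c \<noteq> c'\<close> agree len by (metis nth_equalityI)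
  have base: "base_cell d c \<in> cells d n 1" "base_cell d c' \<in> cells d n 1"
    using base_cell_in_cells \<open>d \<ge> 1\<close> c c' by blast+
  have symbols: "H (base_cell d c) \<in> {1..n}" "H (base_cell d c') \<in> {1..n}"
    using H base by (auto simp: LHC_def)
  have last: "c ! (d - 1) \<in> {1..n}" "c' ! (d - 1) \<in> {1..n}"
    using c c' by (auto simp: cells_def)
  show False
  proof (cases "i = d - 1")
    case True
    have "base_cell d c = base_cell d c'"
      unfolding base_cell_def
      by (rule nth_equalityI) (use len agree True in \<open>auto simp: nth_list_update\<close>)
    then have "cyclic_shift n (c ! (d - 1) - 1) (H (base_cell d c))
        = cyclic_shift n (c' ! (d - 1) - 1) (H (base_cell d c))"
      using eq by (simp add: cyclic_completion_def)
    moreover have "c ! (d - 1) - 1 < n" "c' ! (d - 1) - 1 < n" using last by auto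
    ultimately have "c ! (d - 1) - 1 = c' ! (d - 1) - 1"
      using cyclic_shift_inj_amount by blast
    then show False using differ True last by (simp only: atLeastAtMost_iff) arith
  next
    case False
    have "c ! (d - 1) = c' ! (d - 1)" using agree False \<open>d \<ge> 1\<close> by simp
    then have "cyclic_shift n (c ! (d - 1) - 1) (H (base_cell d c))
        = cyclic_shift n (c ! (d - 1) - 1) (H (base_cell d c'))"
      using eq by (simp add: cyclic_completion_def)
    then have "H (base_cell d c) = H (base_cell d c')"
      using cyclic_shift_inj_symbol symbols by blast
    moreover note base_cell_neq[OF i False differ] same_line_base_cell[OF len i agree]
    ultimately show False using H base by (auto simp: LHC_def)
  qed
qed

lemma cyclic_completion_in_LHC:
  assumes "d \<ge> 1" "n \<ge> 1" "H \<in> LHC d n 1"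
  shows "cyclic_completion d n H \<in> LHC d n n"
  unfolding LHC_def[of d n n] mem_Collect_eq
proof (intro conjI ballI impI)
  show "cyclic_completion d n H c \<in> {1..n}" for c
    unfolding cyclic_completion_def using assms(2) by (rule cyclic_shift_range)
  show "cyclic_completion d n H c \<noteq> cyclic_completion d n H c'"
    if "c \<in> cells d n n" "c' \<in> cells d n n" "c \<noteq> c' \<and> same_line c c'" for c c'
    using cyclic_completion_distinct_on_line assms(1,3) that by blast
qed

lemma NC_ge_2:
  assumes "NC_exists d n" and "\<forall>H \<in> LHC d n 1. completable d n 1 H"
  shows "NC d n \<ge> 2"
proof -
  let ?P = "\<lambda>k. 1 \<le> k \<and> k \<le> n \<and> (\<exists>H \<in> LHC d n k. \<not> completable d n k H)"
  have "?P (NC d n)"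
    unfolding NC_def using assms(1) unfolding NC_exists_def by (rule LeastI_ex)
  with assms(2) have "NC d n \<noteq> 1" by auto
  with \<open>?P (NC d n)\<close> show ?thesis by linarith
qed

theorem mainTheorem5:
  fixes d n :: nat
  assumes "d \<ge> 2" and "n \<ge> 1"
  shows "(\<forall>H \<in> LHC d n 1. completable d n 1 H) \<and> (NC_exists d n \<longrightarrow> NC d n \<ge> 2)"
proof -
  have "completable d n 1 H" if "H \<in> LHC d n 1" for H
    unfolding completable_def
  proof
    show "cyclic_completion d n H \<in> LHC d n n"
      using cyclic_completion_in_LHC assms that by simp
    show "\<forall>c \<in> cells d n 1. cyclic_completion d n H c = H c"
      using cyclic_completion_restricts that by blast
  qed
  then show ?thesis using NC_ge_2 by blast
qed

end
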